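(* Let $E$ be a graph and $K$ a field. Then $\mathbf{K}_{L_K(E)}$ is not Lie solvable if one of the following holds: (1) $E$ contains a cycle with an exit; (2) $E$ contains one of the following subgraphs: $F_1$: three distinct vertices $x,y,v$ with edges $e:x\to y$ and $f:y\to v$; $F_2$: three distinct vertices $x,v,z$ with edges $e:x\to v$ and $f:z\to v$; $F_3$: two distinct vertices $x,v$ with two distinct edges $e,f$ both from $x$ to $v$.
   Context: A graph $E=(E^0,E^1,r,s)$ has vertex set $E^0$, edge set $E^1$, range and source maps $r,s:E^1\to E^0$. A vertex is regular if it emits a finite nonzero number of edges; $\mathrm{Reg}(E)$ is the set of regular vertices. A path is $e_1\cdots e_n$ with $r(e_i)=s(e_{i+1})$; a cycle is a closed path $s(e_1)=r(e_n)$ whose vertices $s(e_i)$ are distinct; an exit of a path $e_1\cdots e_n$ is an edge $e$ with $s(e)=s(e_i)$ for some $i$ and $e\ne e_i$. The Leavitt path algebra $L_K(E)$ is the free $K$-algebra generated by $E^0\cup E^1\cup\{e^*:e\in E^1\}$ subject to: $vv'=\delta_{v,v'}v$; $s(e)e=er(e)=e$; $r(e)e^*=e^*s(e)=e^*$; $e^*f=\delta_{e,f}r(e)$; $v=\sum_{s(e)=v}ee^*$ for $v\in\mathrm{Reg}(E)$. The standard involution ${}^\star$ on $L_K(E)$ is the $K$-linear involution with $v^\star=v$, $e^\star=e^*$, $(e^* )^\star=e$. $\mathbf{K}_{L_K(E)}=\{x\in L_K(E):x^\star=-x\}$, a Lie subalgebra under $[a,b]=ab-ba$. Lie solvable means $\mathcal{L}^{(n)}=0$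 for some $n$, where $\mathcal{L}^{(0)}=\mathcal{L}$, $\mathcal{L}^{(n)}=[\mathcal{L}^{(n-1)},\mathcal{L}^{(n-1)}]$. *)

theory Defs
  imports Main
begin

text \<open>Generators of the free algebra: vertices, real edges, ghost edges.\<close>
datatype ('v, 'e) gen = V 'v | Ed 'e | Gh 'e

text \<open>The free (non-unital) K-algebra on the generators, represented by coefficient
  functions on words: finitely supported, with zero coefficient on the empty word.\<close>
definition free_alg :: "('g list \<Rightarrow> 'k::field) set" where
  "free_alg = {f. finite {w. f w \<noteq> 0} \<and> f [] = 0}"

definition mono :: "'g list \<Rightarrow> 'g list \<Rightarrow> 'k::field" where
  "mono w = (\<lambda>u. if u = w then 1 else 0)"

definition fmult :: "('g list \<Rightarrow> 'k::field) \<Rightarrow> ('g list \<Rightarrow> 'k) \<Rightarrow> 'g list \<Rightarrow> 'k" where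
  "fmult f g = (\<lambda>w. \<Sum>i\<le>length w. f (take i w) * g (drop i w))"

definition fadd :: "('g list \<Rightarrow> 'k::field) \<Rightarrow> ('g list \<Rightarrow> 'k) \<Rightarrow> 'g list \<Rightarrow> 'k" where
  "fadd f g = (\<lambda>w. f w + g w)"

definition fsmult :: "'k::field \<Rightarrow> ('g list \<Rightarrow> 'k) \<Rightarrow> 'g list \<Rightarrow> 'k" where
  "fsmult c f = (\<lambda>w. c * f w)"

definition fminus :: "('g list \<Rightarrow> 'k::field) \<Rightarrow> ('g list \<Rightarrow> 'k) \<Rightarrow> 'g list \<Rightarrow> 'k" where
  "fminus f g = (\<lambda>w. f w - g w)"

definition fbracket :: "('g list \<Rightarrow> 'k::field) \<Rightarrow> ('g list \<Rightarrow> 'k) \<Rightarrow> 'g list \<Rightarrow> 'k" where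
  "fbracket a b = fminus (fmult a b) (fmult b a)"

fun adj :: "('v, 'e) gen \<Rightarrow> ('v, 'e) gen" where
  "adj (V v) = V v" | "adj (Ed e) = Gh e" | "adj (Gh e) = Ed e"

definition fstar :: "(('v, 'e) gen list \<Rightarrow> 'k::field) \<Rightarrow> ('v, 'e) gen list \<Rightarrow> 'k" where
  "fstar f = (\<lambda>w. f (map adj (rev w)))"

inductive_set lspan :: "('g list \<Rightarrow> 'k::field) set \<Rightarrow> ('g list \<Rightarrow> 'k) set"
  for S where
  lspan_zero: "(\<lambda>_. 0) \<in> lspan S"
| lspan_base: "x \<in> S \<Longrightarrow> x \<in> lspan S"
| lspan_add: "x \<in> lspan S \<Longrightarrow> y \<in> lspan S \<Longrightarrow> fadd x y \<in> lspan S"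
| lspan_smult: "x \<in> lspan S \<Longrightarrow> fsmult c x \<in> lspan S"

definition ideal_gen :: "('g list \<Rightarrow> 'k::field) set \<Rightarrow> ('g list \<Rightarrow> 'k) set" where
  "ideal_gen R = lspan ({x. x \<in> R}
     \<union> {fmult (mono u) x | u x. u \<noteq> [] \<and> x \<in> R}
     \<union> {fmult x (mono w) | x w. w \<noteq> [] \<and> x \<in> R}
     \<union> {fmult (fmult (mono u) x) (mono w) | u x w. u \<noteq> [] \<and> w \<noteq> [] \<and> x \<in> R})"

definition regular :: "('e \<Rightarrow> 'v) \<Rightarrow> 'v \<Rightarrow> bool" where
  "regular s v \<longleftrightarrow> finite {e. s e = v} \<and> {e. s e = v} \<noteq> {}"

definition lpa_rels :: "('e \<Rightarrow> 'v) \<Rightarrow> ('e \<Rightarrow> 'v) \<Rightarrow> (('v, 'e) gen list \<Rightarrow> 'k::field) set" where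
  "lpa_rels s r =
     {fminus (mono [V v, V v']) (if v = v' then mono [V v] else (\<lambda>_. 0)) | v v'. True}
   \<union> {fminus (mono [V (s e), Ed e]) (mono [Ed e]) | e. True}
   \<union> {fminus (mono [Ed e, V (r e)]) (mono [Ed e]) | e. True}
   \<union> {fminus (mono [V (r e), Gh e]) (mono [Gh e]) | e. True}
   \<union> {fminus (mono [Gh e, V (s e)]) (mono [Gh e]) | e. True}
   \<union> {fminus (mono [Gh e, Ed f]) (if e = f then mono [V (r e)] else (\<lambda>_. 0)) | e f. True}
   \<union> {fminus (mono [V v]) (\<lambda>w. \<Sum>e\<in>{e. s e = v}. mono [Ed e, Gh e] w) | v. regular s v}"

definition lpa_ideal :: "('e \<Rightarrow> 'v) \<Rightarrow> ('e \<Rightarrow> 'v) \<Rightarrow> (('v, 'e) gen list \<Rightarrow> 'k::field) set" where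
  "lpa_ideal s r = ideal_gen (lpa_rels s r)"

text \<open>Preimages in the free algebra of the derived series of the Lie algebra of skew
  elements of L_K(E) = free_alg / lpa_ideal.\<close>
fun lpa_derived :: "('e \<Rightarrow> 'v) \<Rightarrow> ('e \<Rightarrow> 'v) \<Rightarrow> nat \<Rightarrow> (('v, 'e) gen list \<Rightarrow> 'k::field) set" where
  "lpa_derived s r 0 = {x \<in> free_alg. fadd (fstar x) x \<in> lpa_ideal s r}"
| "lpa_derived s r (Suc n) =
     lspan ({fbracket a b | a b. a \<in> lpa_derived s r n \<and> b \<in> lpa_derived s r n} \<union> lpa_ideal s r)"

definition skew_lie_solvable :: "('e \<Rightarrow> 'v) \<Rightarrow> ('e \<Rightarrow> 'v) \<Rightarrow> 'k::field itself \<Rightarrow> bool" where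
  "skew_lie_solvable s r (_ :: 'k itself) \<longleftrightarrow>
     (\<exists>n. (lpa_derived s r n :: (('v, 'e) gen list \<Rightarrow> 'k) set) \<subseteq> lpa_ideal s r)"

definition is_path :: "('e \<Rightarrow> 'v) \<Rightarrow> ('e \<Rightarrow> 'v) \<Rightarrow> 'e list \<Rightarrow> bool" where
  "is_path s r p \<longleftrightarrow> p \<noteq> [] \<and> (\<forall>i. Suc i < length p \<longrightarrow> r (p ! i) = s (p ! Suc i))"

definition is_cycle :: "('e \<Rightarrow> 'v) \<Rightarrow> ('e \<Rightarrow> 'v) \<Rightarrow> 'e list \<Rightarrow> bool" where
  "is_cycle s r p \<longleftrightarrow> is_path s r p \<and> s (hd p) = r (last p) \<and> distinct (map s p)"

definition is_exit :: "('e \<Rightarrow> 'v) \<Rightarrow> 'e list \<Rightarrow> 'e \<Rightarrow> bool" where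
  "is_exit s p e \<longleftrightarrow> (\<exists>i < length p. s e = s (p ! i) \<and> e \<noteq> p ! i)"

definition has_cycle_with_exit :: "('e \<Rightarrow> 'v) \<Rightarrow> ('e \<Rightarrow> 'v) \<Rightarrow> bool" where
  "has_cycle_with_exit s r \<longleftrightarrow> (\<exists>p e. is_cycle s r p \<and> is_exit s p e)"

definition contains_F1 :: "('e \<Rightarrow> 'v) \<Rightarrow> ('e \<Rightarrow> 'v) \<Rightarrow> bool" where
  "contains_F1 s r \<longleftrightarrow> (\<exists>x y v e f. distinct [x, y, v] \<and>
      s e = x \<and> r e = y \<and> s f = y \<and> r f = v)"

definition contains_F2 :: "('e \<Rightarrow> 'v) \<Rightarrow> ('e \<Rightarrow> 'v) \<Rightarrow> bool" where
  "contains_F2 s r \<longleftrightarrow> (\<exists>x v z e f. distinct [x, v, z] \<and>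
      s e = x \<and> r e = v \<and> s f = z \<and> r f = v)"

definition contains_F3 :: "('e \<Rightarrow> 'v) \<Rightarrow> ('e \<Rightarrow> 'v) \<Rightarrow> bool" where
  "contains_F3 s r \<longleftrightarrow> (\<exists>x v e f. x \<noteq> v \<and> e \<noteq> f \<and>
      s e = x \<and> r e = v \<and> s f = x \<and> r f = v)"

end

theory Submission
  imports Defs
begin

(* Suppose words p_1, p_2, p_3 satisfy p_i^* p_j = \<delta>_ij v and p_i v = p_i in L_K(E). Then
   E_ij = p_i p_j^* are matrix units, the skew elements A_ij = E_ij - E_ji satisfy
   [A_ij, A_jk] = A_ik for distinct i, j, k, and hence every A_ik lies in every term of the
   derived series of K_{L_K(E)}. Each configuration of the theorem yields such words: three walks
   ending at a common vertex v, no one an initial segment of another (the vertex v itself counting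
   as the trivial walk). Finally A_ik is not zero in L_K(E), as it acts nontrivially on the space
   of paths, on which L_K(E) acts once a trailing distinguished edge g(w) at each regular vertex w
   is identified with the empty path at w. *)

section \<open>Words and two-sided multiplication\<close>

abbreviation fzero :: "'g list \<Rightarrow> 'k::field" where
  "fzero \<equiv> \<lambda>_. 0"

lemma fmult_mono_left:
  "fmult (mono u) x m = (if take (length u) m = u then x (drop (length u) m) else (0::'k::field))"
proof -
  have "fmult (mono u) x m =
      (\<Sum>i\<le>length m. if i = length u then if take i m = u then x (drop i m) else 0 else 0)"
    unfolding fmult_def mono_def by (rule sum.cong) auto
  also have "\<dots> = (if take (length u) m = u then x (drop (length u) m) else 0)"
    by (subst sum.delta) auto
  finally show ?thesis .
qed

lemma fmult_mono_right:
  "fmult x (mono w) m = (if length w \<le> length m \<and> drop (length m - length w) m = w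
      then x (take (length m - length w) m) else (0::'k::field))"
proof -
  have "fmult x (mono w) m = (\<Sum>i\<le>length m. if i = length m - length w then
       if length w \<le> length m \<and> drop i m = w then x (take i m) else 0 else 0)"
    unfolding fmult_def mono_def by (rule sum.cong) auto
  also have "\<dots> = (if length w \<le> length m \<and> drop (length m - length w) m = w
      then x (take (length m - length w) m) else 0)"
    by (subst sum.delta) auto
  finally show ?thesis .
qed

lemma fmult_mono_left_append [simp]: "fmult (mono u) x (u @ m) = (x m :: 'k::field)"
  by (simp add: fmult_mono_left)

lemma fmult_mono_left_eq_0: "(\<And>m'. m \<noteq> u @ m') \<Longrightarrow> fmult (mono u) x m = (0::'k::field)"
  by (simp add: fmult_mono_left) (metis append_take_drop_id)

lemma fmult_mono_right_append [simp]: "fmult x (mono w) (m @ w) = (x m :: 'k::field)"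
  by (simp add: fmult_mono_right)

lemma fmult_mono_right_eq_0: "(\<And>m'. m \<noteq> m' @ w) \<Longrightarrow> fmult x (mono w) m = (0::'k::field)"
  by (simp add: fmult_mono_right) (metis append_take_drop_id)

definition ctx :: "'g list \<Rightarrow> ('g list \<Rightarrow> 'k::field) \<Rightarrow> 'g list \<Rightarrow> 'g list \<Rightarrow> 'k" where
  "ctx u x w = fmult (mono u) (fmult x (mono w))"

lemma ctx_append [simp]: "ctx u x w (u @ m @ w) = x m"
  by (simp add: ctx_def)

lemma ctx_eq_0:
  assumes "\<And>m'. m \<noteq> u @ m' @ w"
  shows "ctx u x w m = 0"
proof (cases "\<exists>m1. m = u @ m1")
  case True
  then obtain m1 where "m = u @ m1" by blast
  with assms show ?thesis by (auto simp: ctx_def intro!: fmult_mono_right_eq_0)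
qed (auto simp: ctx_def intro!: fmult_mono_left_eq_0)

lemma ctx_eqI:
  assumes "\<And>m. f (u @ m @ w) = x m" and "\<And>m. (\<And>m'. m \<noteq> u @ m' @ w) \<Longrightarrow> f m = 0"
  shows "f = ctx u x w"
proof
  fix m
  show "f m = ctx u x w m"
    using assms ctx_eq_0[of m u w x] by (cases "\<exists>m'. m = u @ m' @ w") auto
qed

lemma ctx_Nil_Nil [simp]: "ctx [] x [] = x"
  by (rule sym, rule ctx_eqI) auto

lemma ctx_Nil_right: "ctx u x [] = fmult (mono u) x"
  by (rule sym, rule ctx_eqI) (auto intro: fmult_mono_left_eq_0)

lemma ctx_Nil_left: "ctx [] x w = fmult x (mono w)"
  by (rule sym, rule ctx_eqI) (auto intro: fmult_mono_right_eq_0)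

lemma fmult_mono_Nil_left [simp]: "fmult (mono []) x = x"
  by (metis ctx_Nil_Nil ctx_Nil_right)

lemma fmult_mono_Nil_right [simp]: "fmult x (mono []) = x"
  by (metis ctx_Nil_Nil ctx_Nil_left)

lemma fmult_fmult_mono: "fmult (fmult (mono u) x) (mono w) = ctx u x w"
proof (rule ctx_eqI)
  fix m
  assume out: "\<And>m'. m \<noteq> u @ m' @ w"
  show "fmult (fmult (mono u) x) (mono w) m = 0"
  proof (cases "\<exists>m1. m = m1 @ w")
    case True
    then obtain m1 where "m = m1 @ w" by blast
    with out show ?thesis by (auto intro!: fmult_mono_left_eq_0)
  qed (auto intro!: fmult_mono_right_eq_0)
qed (metis append_assoc fmult_mono_left_append fmult_mono_right_append)

lemma ctx_ctx: "ctx u (ctx u' x w') w = ctx (u @ u') x (w' @ w)"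
proof (rule ctx_eqI)
  fix m
  assume out: "\<And>m'. m \<noteq> (u @ u') @ m' @ w' @ w"
  show "ctx u (ctx u' x w') w m = 0"
  proof (cases "\<exists>m1. m = u @ m1 @ w")
    case True
    then obtain m1 where "m = u @ m1 @ w" by blast
    with out show ?thesis by (auto intro!: ctx_eq_0)
  qed (auto intro!: ctx_eq_0)
qed (metis append_assoc ctx_append)

lemma ctx_mono: "ctx u (mono m) w = mono (u @ m @ w)"
  by (rule sym, rule ctx_eqI) (auto simp: mono_def)

lemma fmult_mono_mono: "fmult (mono u) (mono w) = mono (u @ w)"
  using ctx_mono[of u w "[]"] by (simp add: ctx_Nil_right)

lemma ctx_zero [simp]: "ctx u fzero w = fzero"
  by (rule sym, rule ctx_eqI) auto

lemma ctx_fadd: "ctx u (fadd x y) w = fadd (ctx u x w) (ctx u y w)"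
  by (rule sym, rule ctx_eqI) (auto simp: fadd_def ctx_eq_0)

lemma ctx_fsmult: "ctx u (fsmult c x) w = fsmult c (ctx u x w)"
  by (rule sym, rule ctx_eqI) (auto simp: fsmult_def ctx_eq_0)

lemma ctx_fminus: "ctx u (fminus x y) w = fminus (ctx u x w) (ctx u y w)"
  by (rule sym, rule ctx_eqI) (auto simp: fminus_def ctx_eq_0)

section \<open>Congruence modulo the defining relations\<close>

lemma lspan_fminus: "x \<in> lspan S \<Longrightarrow> y \<in> lspan S \<Longrightarrow> fminus x y \<in> lspan S"
  using lspan_add[OF _ lspan_smult[of y S "-1"], of x]
  by (simp add: fadd_def fsmult_def fminus_def)

lemma ideal_gen_eq_lspan_ctx: "ideal_gen R = lspan {ctx u x w | u x w. x \<in> R}"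
proof -
  have "{x. x \<in> R}
     \<union> {fmult (mono u) x | u x. u \<noteq> [] \<and> x \<in> R}
     \<union> {fmult x (mono w) | x w. w \<noteq> [] \<and> x \<in> R}
     \<union> {fmult (fmult (mono u) x) (mono w) | u x w. u \<noteq> [] \<and> w \<noteq> [] \<and> x \<in> R}
    = {ctx u x w | u x w. x \<in> R}" (is "?gens = _")
  proof (intro equalityI subsetI)
    fix y assume "y \<in> ?gens"
    then show "y \<in> {ctx u x w | u x w. x \<in> R}"
      by (elim UnE; clarsimp) (metis ctx_Nil_Nil ctx_Nil_left ctx_Nil_right fmult_fmult_mono)+
  next
    fix y assume "y \<in> {ctx u x w | u x w. x \<in> R}"
    then obtain u x w where y: "y = ctx u x w" and "x \<in> R" by blast
    then show "y \<in> ?gens"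
      unfolding y by (cases "u = []"; cases "w = []") (auto simp: fmult_fmult_mono ctx_Nil_left ctx_Nil_right, blast)
  qed
  then show ?thesis by (simp add: ideal_gen_def)
qed

lemma ideal_gen_ctx: "x \<in> ideal_gen R \<Longrightarrow> ctx u x w \<in> ideal_gen R"
  unfolding ideal_gen_eq_lspan_ctx
proof (induction x rule: lspan.induct)
  case (lspan_base y)
  then obtain u' x w' where "y = ctx u' x w'" "x \<in> R" by blast
  then show ?case by (auto simp: ctx_ctx intro!: lspan.lspan_base)
qed (auto simp: ctx_fadd ctx_fsmult intro: lspan.intros)

definition ideal_cong :: "('g list \<Rightarrow> 'k::field) set \<Rightarrow> ('g list \<Rightarrow> 'k) \<Rightarrow> ('g list \<Rightarrow> 'k) \<Rightarrow> bool" where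
  "ideal_cong R x y \<longleftrightarrow> fminus x y \<in> ideal_gen R"

lemma ideal_cong_sym: "ideal_cong R x y \<Longrightarrow> ideal_cong R y x"
  using lspan_smult[of "fminus x y" _ "-1"] by (simp add: ideal_cong_def ideal_gen_def fminus_def fsmult_def)

lemma ideal_cong_trans [trans]: "ideal_cong R x y \<Longrightarrow> ideal_cong R y z \<Longrightarrow> ideal_cong R x z"
  using lspan_add[of "fminus x y" _ "fminus y z"] by (simp add: ideal_cong_def ideal_gen_def fminus_def fadd_def)

lemma ideal_cong_fminus:
  "ideal_cong R a b \<Longrightarrow> ideal_cong R c d \<Longrightarrow> ideal_cong R (fminus a c) (fminus b d)"
  using lspan_fminus[of "fminus a b" _ "fminus c d"]
  by (simp add: ideal_cong_def ideal_gen_def fminus_def algebra_simps)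

lemma ideal_cong_ctx: "ideal_cong R x y \<Longrightarrow> ideal_cong R (ctx u x w) (ctx u y w)"
  by (simp add: ideal_cong_def ideal_gen_ctx flip: ctx_fminus)

lemma ideal_cong_subword:
  "ideal_cong R (mono m) (mono m') \<Longrightarrow> x = u @ m @ w \<Longrightarrow> y = u @ m' @ w \<Longrightarrow>
    ideal_cong R (mono x) (mono y)"
  using ideal_cong_ctx[of R "mono m" "mono m'" u w] by (simp add: ctx_mono)

lemma ideal_cong_subword_zero:
  "ideal_cong R (mono m) fzero \<Longrightarrow> x = u @ m @ w \<Longrightarrow> ideal_cong R (mono x) fzero"
  using ideal_cong_ctx[of R "mono m" fzero u w] by (simp add: ctx_mono)

lemma ideal_cong_rel: "fminus x y \<in> R \<Longrightarrow> ideal_cong R x y"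
  by (simp add: ideal_cong_def ideal_gen_def lspan_base)

abbreviation lpa_cong :: "('e \<Rightarrow> 'v) \<Rightarrow> ('e \<Rightarrow> 'v) \<Rightarrow>
    (('v, 'e) gen list \<Rightarrow> 'k::field) \<Rightarrow> (('v, 'e) gen list \<Rightarrow> 'k) \<Rightarrow> bool" where
  "lpa_cong s r \<equiv> ideal_cong (lpa_rels s r)"

fun left_vertex :: "('e \<Rightarrow> 'v) \<Rightarrow> ('e \<Rightarrow> 'v) \<Rightarrow> ('v, 'e) gen \<Rightarrow> 'v" where
  "left_vertex s r (V v) = v"
| "left_vertex s r (Ed e) = s e"
| "left_vertex s r (Gh e) = r e"

fun right_vertex :: "('e \<Rightarrow> 'v) \<Rightarrow> ('e \<Rightarrow> 'v) \<Rightarrow> ('v, 'e) gen \<Rightarrow> 'v" where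
  "right_vertex s r (V v) = v"
| "right_vertex s r (Ed e) = r e"
| "right_vertex s r (Gh e) = s e"

lemma lpa_cong_vertices: "lpa_cong s r (mono [V v, V v']) (if v = v' then mono [V v] else fzero)"
  by (rule ideal_cong_rel) (auto simp: lpa_rels_def)

lemma lpa_cong_ghost_edge: "lpa_cong s r (mono [Gh e, Ed f]) (if e = f then mono [V (r e)] else fzero)"
  by (rule ideal_cong_rel) (auto simp: lpa_rels_def)

lemma lpa_cong_left_vertex:
  "lpa_cong s r (mono [V (left_vertex s r a), a] :: _ \<Rightarrow> 'k::field) (mono [a])"
proof (cases a)
  case (V v)
  then show ?thesis using lpa_cong_vertices[of s r v v] by simp
next
  case (Ed e)
  have "(fminus (mono [V (s e), Ed e]) (mono [Ed e]) :: _ \<Rightarrow> 'k) \<in> lpa_rels s r"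
    unfolding lpa_rels_def by blast
  then show ?thesis using Ed by (simp add: ideal_cong_rel)
next
  case (Gh e)
  have "(fminus (mono [V (r e), Gh e]) (mono [Gh e]) :: _ \<Rightarrow> 'k) \<in> lpa_rels s r"
    unfolding lpa_rels_def by blast
  then show ?thesis using Gh by (simp add: ideal_cong_rel)
qed

lemma lpa_cong_right_vertex:
  "lpa_cong s r (mono [a, V (right_vertex s r a)] :: _ \<Rightarrow> 'k::field) (mono [a])"
proof (cases a)
  case (V v)
  then show ?thesis using lpa_cong_vertices[of s r v v] by simp
next
  case (Ed e)
  have "(fminus (mono [Ed e, V (r e)]) (mono [Ed e]) :: _ \<Rightarrow> 'k) \<in> lpa_rels s r"
    unfolding lpa_rels_def by blast
  then show ?thesis using Ed by (simp add: ideal_cong_rel)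
next
  case (Gh e)
  have "(fminus (mono [Gh e, V (s e)]) (mono [Gh e]) :: _ \<Rightarrow> 'k) \<in> lpa_rels s r"
    unfolding lpa_rels_def by blast
  then show ?thesis using Gh by (simp add: ideal_cong_rel)
qed

lemma lpa_cong_mismatch:
  assumes "right_vertex s r a \<noteq> left_vertex s r b"
  shows "lpa_cong s r (mono [a, b] :: _ \<Rightarrow> 'k::field) fzero"
proof -
  have "lpa_cong s r (mono [a, b] :: _ \<Rightarrow> 'k) (mono [a, V (right_vertex s r a), b])"
    by (rule ideal_cong_subword[OF ideal_cong_sym[OF lpa_cong_right_vertex], where u="[]" and w="[b]"])
      simp_all
  also have "lpa_cong s r \<dots> (mono [a, V (right_vertex s r a), V (left_vertex s r b), b])"
    by (rule ideal_cong_subword[OF ideal_cong_sym[OF lpa_cong_left_vertex],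
          where u="[a, V (right_vertex s r a)]" and w="[]"])
      simp_all
  also have "lpa_cong s r \<dots> fzero"
    by (rule ideal_cong_subword_zero[where u="[a]" and w="[b]"])
      (use lpa_cong_vertices[of s r "right_vertex s r a" "left_vertex s r b"] assms in simp_all)
  finally show ?thesis .
qed

section \<open>Walks ending at a common vertex give matrix units\<close>

definition word_star :: "('v, 'e) gen list \<Rightarrow> ('v, 'e) gen list" where
  "word_star m = rev (map adj m)"

lemma word_star_append [simp]: "word_star (m @ m') = word_star m' @ word_star m"
  by (simp add: word_star_def)

lemma word_star_map_Ed [simp]: "word_star (map Ed \<alpha>) = map Gh (rev \<alpha>)"
  by (simp add: word_star_def rev_map)

lemma adj_adj [simp]: "adj (adj a) = a"
  by (cases a) simp_all

lemma word_star_Nil [simp]: "word_star [] = []"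
  by (simp add: word_star_def)

lemma word_star_Cons [simp]: "word_star (a # m) = word_star m @ [adj a]"
  by (simp add: word_star_def)

lemma word_star_involutive [simp]: "word_star (word_star m) = m"
  by (simp add: word_star_def rev_map comp_def)

lemma fstar_mono: "fstar (mono m) = mono (word_star m)"
proof -
  have "map adj (rev w) = m \<longleftrightarrow> w = word_star m" for w
    by (auto simp: word_star_def rev_map comp_def)
  then show ?thesis by (auto simp: fstar_def mono_def fun_eq_iff)
qed

fun walk_start :: "('e \<Rightarrow> 'v) \<Rightarrow> 'v \<Rightarrow> 'e list \<Rightarrow> 'v" where
  "walk_start s v [] = v"
| "walk_start s v (e # _) = s e"

fun walk_to :: "('e \<Rightarrow> 'v) \<Rightarrow> ('e \<Rightarrow> 'v) \<Rightarrow> 'e list \<Rightarrow> 'v \<Rightarrow> bool" where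
  "walk_to s r [] v \<longleftrightarrow> True"
| "walk_to s r (e # \<alpha>) v \<longleftrightarrow> r e = walk_start s v \<alpha> \<and> walk_to s r \<alpha> v"

lemma walk_start_append: "walk_start s v (\<alpha> @ \<beta>) = walk_start s (walk_start s v \<beta>) \<alpha>"
  by (cases \<alpha>) simp_all

lemma walk_to_append:
  "walk_to s r (\<alpha> @ \<beta>) v \<longleftrightarrow> walk_to s r \<alpha> (walk_start s v \<beta>) \<and> walk_to s r \<beta> v"
  by (induction \<alpha>) (auto simp: walk_start_append)

lemma walk_to_last: "walk_to s r \<alpha> v \<Longrightarrow> \<alpha> \<noteq> [] \<Longrightarrow> r (last \<alpha>) = v"
  by (induction \<alpha>) (auto simp: neq_Nil_conv)

definition diverging :: "('e \<Rightarrow> 'v) \<Rightarrow> 'v \<Rightarrow> 'e list \<Rightarrow> 'e list \<Rightarrow> bool" where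
  "diverging s v \<alpha> \<beta> \<longleftrightarrow> walk_start s v \<alpha> \<noteq> walk_start s v \<beta> \<or>
     (\<exists>\<gamma> a b \<alpha>' \<beta>'. \<alpha> = \<gamma> @ a # \<alpha>' \<and> \<beta> = \<gamma> @ b # \<beta>' \<and> a \<noteq> b)"

lemma diverging_sym: "diverging s v \<alpha> \<beta> \<Longrightarrow> diverging s v \<beta> \<alpha>"
  unfolding diverging_def by metis

lemma not_diverging_self: "\<not> diverging s v \<alpha> \<alpha>"
  unfolding diverging_def by auto

definition path_word :: "'v \<Rightarrow> 'e list \<Rightarrow> ('v, 'e) gen list" where
  "path_word v \<alpha> = (if \<alpha> = [] then [V v] else map Ed \<alpha>)"

lemma inj_path_word: "inj (path_word v)"
  by (rule injI) (auto simp: path_word_def inj_map_eq_map inj_def split: if_splits)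

lemma lpa_cong_walk_star_walk:
  assumes "walk_to s r \<gamma> u" and "\<gamma> \<noteq> []"
  shows "lpa_cong s r (mono (map Gh (rev \<gamma>) @ map Ed \<gamma>) :: _ \<Rightarrow> 'k::field) (mono [V u])"
  using assms
proof (induction \<gamma>)
  case (Cons e \<gamma>)
  show ?case
  proof (cases \<gamma>)
    case Nil
    then show ?thesis using Cons.prems lpa_cong_ghost_edge[of s r e e] by simp
  next
    case (Cons f \<delta>)
    with Cons.prems have ef: "r e = s f" and \<gamma>: "walk_to s r \<gamma> u" by simp_all
    have "lpa_cong s r (mono (map Gh (rev (e # \<gamma>)) @ map Ed (e # \<gamma>)) :: _ \<Rightarrow> 'k)
        (mono (map Gh (rev \<gamma>) @ [V (r e)] @ map Ed \<gamma>))"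
      by (rule ideal_cong_subword[OF lpa_cong_ghost_edge[of s r e e, simplified],
          where u="map Gh (rev \<gamma>)" and w="map Ed \<gamma>"]) simp_all
    also have "lpa_cong s r \<dots> (mono (map Gh (rev \<gamma>) @ map Ed \<gamma>))"
      by (rule ideal_cong_subword[OF lpa_cong_left_vertex[of s r "Ed f"],
          where u="map Gh (rev \<gamma>)" and w="map Ed \<delta>"]) (simp_all add: Cons ef)
    also have "lpa_cong s r \<dots> (mono [V u])"
      using Cons.IH \<gamma> Cons by simp
    finally show ?thesis .
  qed
qed simp

lemma lpa_cong_path_word_diag:
  assumes "walk_to s r \<alpha> v"
  shows "lpa_cong s r (mono (word_star (path_word v \<alpha>) @ path_word v \<alpha>) :: _ \<Rightarrow> 'k::field)
    (mono [V v])"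
proof (cases "\<alpha> = []")
  case True
  then show ?thesis using lpa_cong_vertices[of s r v v] by (simp add: path_word_def)
next
  case False
  then show ?thesis using lpa_cong_walk_star_walk[OF assms] by (simp add: path_word_def)
qed

lemma lpa_cong_path_word_unit:
  assumes "walk_to s r \<alpha> v"
  shows "lpa_cong s r (mono (path_word v \<alpha> @ [V v]) :: _ \<Rightarrow> 'k::field) (mono (path_word v \<alpha>))"
proof (cases "\<alpha> = []")
  case True
  then show ?thesis using lpa_cong_vertices[of s r v v] by (simp add: path_word_def)
next
  case False
  then have "map Ed \<alpha> = map Ed (butlast \<alpha>) @ [Ed (last \<alpha>)]"
    by (metis append_butlast_last_id list.simps(8,9) map_append)
  with False show ?thesis
    by (intro ideal_cong_subword[OF lpa_cong_right_vertex[of s r "Ed (last \<alpha>)"],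
          where u="map Ed (butlast \<alpha>)" and w="[]"])
      (simp_all add: path_word_def walk_to_last[OF assms])
qed

lemma lpa_cong_ghost_other_edge:
  assumes "a \<noteq> b"
  shows "lpa_cong s r (mono (u @ [Gh a, Ed b] @ w) :: _ \<Rightarrow> 'k::field) fzero"
proof (rule ideal_cong_subword_zero)
  show "lpa_cong s r (mono [Gh a, Ed b] :: _ \<Rightarrow> 'k) fzero"
    using lpa_cong_ghost_edge[of s r a b] assms by simp
qed simp

lemma lpa_cong_path_word_start_differ:
  assumes "walk_start s v \<alpha> \<noteq> walk_start s v \<beta>"
  shows "lpa_cong s r (mono (word_star (path_word v \<alpha>) @ path_word v \<beta>) :: _ \<Rightarrow> 'k::field) fzero"
proof (cases \<alpha>; cases \<beta>)
  fix b \<beta>' assume "\<alpha> = []" "\<beta> = b # \<beta>'"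
  with assms show ?thesis
    by (intro ideal_cong_subword_zero[OF lpa_cong_mismatch[of s r "V v" "Ed b"],
          where u="[]" and w="map Ed \<beta>'"]) (simp_all add: path_word_def)
next
  fix a \<alpha>' assume "\<alpha> = a # \<alpha>'" "\<beta> = []"
  with assms show ?thesis
    by (intro ideal_cong_subword_zero[OF lpa_cong_mismatch[of s r "Gh a" "V v"],
          where u="map Gh (rev \<alpha>')" and w="[]"]) (simp_all add: path_word_def)
next
  fix a \<alpha>' b \<beta>' assume "\<alpha> = a # \<alpha>'" "\<beta> = b # \<beta>'"
  with assms show ?thesis
    using lpa_cong_ghost_other_edge[of a b s r "map Gh (rev \<alpha>')" "map Ed \<beta>'"]
    by (auto simp: path_word_def)
qed (use assms in simp)

lemma lpa_cong_path_word_branch: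
  assumes \<alpha>: "walk_to s r \<alpha> v" and \<alpha>_eq: "\<alpha> = \<gamma> @ a # \<alpha>'" and \<beta>_eq: "\<beta> = \<gamma> @ b # \<beta>'"
    and "a \<noteq> b"
  shows "lpa_cong s r (mono (word_star (path_word v \<alpha>) @ path_word v \<beta>) :: _ \<Rightarrow> 'k::field) fzero"
proof -
  let ?u = "map Gh (rev \<alpha>') @ [Gh a]" and ?w = "Ed b # map Ed \<beta>'"
  have word: "word_star (path_word v \<alpha>) @ path_word v \<beta> =
      ?u @ (map Gh (rev \<gamma>) @ map Ed \<gamma>) @ ?w"
    by (simp add: \<alpha>_eq \<beta>_eq path_word_def)
  show ?thesis
  proof (cases "\<gamma> = []")
    case True
    then show ?thesis
      unfolding word using lpa_cong_ghost_other_edge[OF \<open>a \<noteq> b\<close>] by simp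
  next
    case False
    have "walk_to s r \<gamma> (s a)"
      using \<alpha> by (simp add: \<alpha>_eq walk_to_append)
    then have "lpa_cong s r (mono (?u @ (map Gh (rev \<gamma>) @ map Ed \<gamma>) @ ?w) :: _ \<Rightarrow> 'k)
        (mono (map Gh (rev \<alpha>') @ [Gh a, V (s a)] @ ?w))"
      by (intro ideal_cong_subword[OF lpa_cong_walk_star_walk[OF _ False], where u="?u" and w="?w"])
        simp_all
    also have "lpa_cong s r \<dots> (mono (map Gh (rev \<alpha>') @ [Gh a, Ed b] @ map Ed \<beta>'))"
      by (rule ideal_cong_subword[OF lpa_cong_right_vertex[of s r "Gh a"]]) simp_all
    also have "lpa_cong s r \<dots> fzero"
      by (rule lpa_cong_ghost_other_edge[OF \<open>a \<noteq> b\<close>])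
    finally show ?thesis unfolding word .
  qed
qed

lemma lpa_cong_path_word_diverging:
  assumes "walk_to s r \<alpha> v" and "diverging s v \<alpha> \<beta>"
  shows "lpa_cong s r (mono (word_star (path_word v \<alpha>) @ path_word v \<beta>) :: _ \<Rightarrow> 'k::field) fzero"
  using assms(2) unfolding diverging_def
proof (elim disjE exE conjE)
  fix \<gamma> a b \<alpha>' \<beta>' assume "\<alpha> = \<gamma> @ a # \<alpha>'" "\<beta> = \<gamma> @ b # \<beta>'" "a \<noteq> b"
  then show ?thesis by (rule lpa_cong_path_word_branch[OF assms(1)])
qed (rule lpa_cong_path_word_start_differ)

definition lpa_matrix_units ::
    "('e \<Rightarrow> 'v) \<Rightarrow> ('e \<Rightarrow> 'v) \<Rightarrow> 'k::field itself \<Rightarrow> 'v \<Rightarrow> ('v, 'e) gen list set \<Rightarrow> bool" where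
  "lpa_matrix_units s r (_ :: 'k itself) v P \<longleftrightarrow> [] \<notin> P \<and>
     (\<forall>x\<in>P. \<forall>y\<in>P. lpa_cong s r (mono (word_star x @ y) :: _ \<Rightarrow> 'k)
        (if x = y then mono [V v] else fzero)) \<and>
     (\<forall>x\<in>P. lpa_cong s r (mono (x @ [V v]) :: _ \<Rightarrow> 'k) (mono x))"

lemma lpa_matrix_units_path_words:
  assumes walks: "\<And>\<alpha>. \<alpha> \<in> W \<Longrightarrow> walk_to s r \<alpha> v"
    and diverging: "\<And>\<alpha> \<beta>. \<alpha> \<in> W \<Longrightarrow> \<beta> \<in> W \<Longrightarrow> \<alpha> \<noteq> \<beta> \<Longrightarrow> diverging s v \<alpha> \<beta>"
  shows "lpa_matrix_units s r TYPE('k::field) v (path_word v ` W)"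
proof -
  have "[] \<notin> path_word v ` W"
    by (auto simp: path_word_def split: if_splits)
  moreover have "lpa_cong s r (mono (word_star (path_word v \<alpha>) @ path_word v \<beta>) :: _ \<Rightarrow> 'k)
      (if path_word v \<alpha> = path_word v \<beta> then mono [V v] else fzero)"
    if "\<alpha> \<in> W" "\<beta> \<in> W" for \<alpha> \<beta>
  proof (cases "\<alpha> = \<beta>")
    case True
    then show ?thesis using lpa_cong_path_word_diag[OF walks[OF that(1)]] by simp
  next
    case False
    then show ?thesis
      using lpa_cong_path_word_diverging[OF walks[OF that(1)] diverging[OF that False]]
        inj_path_word[THEN injD, of v \<alpha> \<beta>] by auto
  qed
  ultimately show ?thesis
    using lpa_cong_path_word_unit[OF walks] by (auto simp: lpa_matrix_units_def)
qed

section \<open>Skew matrix units survive in every derived term\<close>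

lemma fmult_fminus_left: "fmult (fminus a b) c = fminus (fmult a c) (fmult b c)"
  by (simp add: fmult_def fminus_def fun_eq_iff left_diff_distrib sum_subtractf)

lemma fmult_fminus_right: "fmult c (fminus a b) = fminus (fmult c a) (fmult c b)"
  by (simp add: fmult_def fminus_def fun_eq_iff right_diff_distrib sum_subtractf)

lemma lpa_matrix_units_nonempty:
  "lpa_matrix_units s r TYPE('k::field) v P \<Longrightarrow> x \<in> P \<Longrightarrow> x \<noteq> []"
  unfolding lpa_matrix_units_def by blast

lemma lpa_matrix_units_word_star:
  "lpa_matrix_units s r TYPE('k::field) v P \<Longrightarrow> x \<in> P \<Longrightarrow> y \<in> P \<Longrightarrow>
    lpa_cong s r (mono (word_star x @ y) :: _ \<Rightarrow> 'k) (if x = y then mono [V v] else fzero)"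
  unfolding lpa_matrix_units_def by blast

lemma lpa_matrix_units_diag:
  "lpa_matrix_units s r TYPE('k::field) v P \<Longrightarrow> x \<in> P \<Longrightarrow>
    lpa_cong s r (mono (word_star x @ x) :: _ \<Rightarrow> 'k) (mono [V v])"
  using lpa_matrix_units_word_star[of s r v P x x] by simp

lemma lpa_matrix_units_orth:
  "lpa_matrix_units s r TYPE('k::field) v P \<Longrightarrow> x \<in> P \<Longrightarrow> y \<in> P \<Longrightarrow> x \<noteq> y \<Longrightarrow>
    lpa_cong s r (mono (word_star x @ y) :: _ \<Rightarrow> 'k) fzero"
  using lpa_matrix_units_word_star[of s r v P x y] by simp

lemma lpa_matrix_units_unit:
  "lpa_matrix_units s r TYPE('k::field) v P \<Longrightarrow> x \<in> P \<Longrightarrow>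
    lpa_cong s r (mono (x @ [V v]) :: _ \<Rightarrow> 'k) (mono x)"
  unfolding lpa_matrix_units_def by blast

context
  fixes s r :: "'e \<Rightarrow> 'v" and v :: 'v and P :: "('v, 'e) gen list set"
  assumes units: "lpa_matrix_units s r TYPE('k::field) v P"
begin

lemma lpa_matrix_units_mult_same:
  assumes "x \<in> P" "y \<in> P"
  shows "lpa_cong s r (fmult (mono (x @ word_star y)) (mono (y @ word_star w)) :: _ \<Rightarrow> 'k)
    (mono (x @ word_star w))"
proof -
  have "lpa_cong s r (fmult (mono (x @ word_star y)) (mono (y @ word_star w)) :: _ \<Rightarrow> 'k)
      (mono ((x @ [V v]) @ word_star w))"
    unfolding fmult_mono_mono
    by (rule ideal_cong_subword[OF lpa_matrix_units_diag[OF units assms(2)],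
          where u=x and w="word_star w"]) simp_all
  also have "lpa_cong s r \<dots> (mono (x @ word_star w))"
    by (rule ideal_cong_subword[OF lpa_matrix_units_unit[OF units assms(1)],
          where u="[]" and w="word_star w"]) simp_all
  finally show ?thesis .
qed

lemma lpa_matrix_units_mult_other:
  assumes "y \<in> P" "z \<in> P" "y \<noteq> z"
  shows "lpa_cong s r (fmult (mono (x @ word_star y)) (mono (z @ word_star w)) :: _ \<Rightarrow> 'k) fzero"
  unfolding fmult_mono_mono
  by (rule ideal_cong_subword_zero[OF lpa_matrix_units_orth[OF units assms],
        where u=x and w="word_star w"]) simp

end

definition skew_unit :: "('v, 'e) gen list \<Rightarrow> ('v, 'e) gen list \<Rightarrow> ('v, 'e) gen list \<Rightarrow> 'k::field" where
  "skew_unit x y = fminus (mono (x @ word_star y)) (mono (y @ word_star x))"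

lemma skew_unit_bracket:
  assumes units: "lpa_matrix_units s r TYPE('k::field) v P"
    and P: "x \<in> P" "y \<in> P" "z \<in> P" and distinct: "x \<noteq> y" "y \<noteq> z" "x \<noteq> z"
  shows "lpa_cong s r (fbracket (skew_unit x y) (skew_unit y z)) (skew_unit x z :: _ \<Rightarrow> 'k)"
proof -
  let ?E = "\<lambda>a b. mono (a @ word_star b) :: _ \<Rightarrow> 'k"
  have expand: "fbracket (skew_unit x y) (skew_unit y z) =
      fminus (fminus (fminus (fmult (?E x y) (?E y z)) (fmult (?E y x) (?E y z)))
                     (fminus (fmult (?E x y) (?E z y)) (fmult (?E y x) (?E z y))))
             (fminus (fminus (fmult (?E y z) (?E x y)) (fmult (?E z y) (?E x y)))
                     (fminus (fmult (?E y z) (?E y x)) (fmult (?E z y) (?E y x))))"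
    by (simp add: fbracket_def skew_unit_def fmult_fminus_left fmult_fminus_right)
  have target: "skew_unit x z =
      fminus (fminus (fminus (?E x z) fzero) (fminus fzero fzero))
             (fminus (fminus fzero fzero) (fminus fzero (?E z x)))"
    by (simp add: skew_unit_def fminus_def fun_eq_iff)
  show ?thesis
    unfolding expand target using P distinct
    by (intro ideal_cong_fminus lpa_matrix_units_mult_same[OF units]
        lpa_matrix_units_mult_other[OF units]) simp_all
qed

lemma skew_unit_in_free_alg: "x \<noteq> [] \<Longrightarrow> skew_unit x y \<in> free_alg"
proof -
  assume "x \<noteq> []"
  have "{m. skew_unit x y m \<noteq> 0} \<subseteq> {x @ word_star y, y @ word_star x}"
    by (auto simp: skew_unit_def fminus_def mono_def split: if_splits)
  then have "finite {m. skew_unit x y m \<noteq> 0}"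
    by (rule finite_subset) simp
  moreover have "skew_unit x y [] = 0"
    using \<open>x \<noteq> []\<close> by (simp add: skew_unit_def fminus_def mono_def word_star_def)
  ultimately show ?thesis by (simp add: free_alg_def)
qed

lemma fstar_fminus: "fstar (fminus a b) = fminus (fstar a) (fstar b)"
  by (simp add: fstar_def fminus_def)

lemma fstar_skew_unit: "fstar (skew_unit x y) = skew_unit y x"
  by (simp add: skew_unit_def fstar_fminus fstar_mono)

lemma skew_unit_lpa_derived:
  assumes units: "lpa_matrix_units s r TYPE('k::field) v P" and card: "3 \<le> card P"
    and "x \<in> P" "z \<in> P" "x \<noteq> z"
  shows "(skew_unit x z :: _ \<Rightarrow> 'k) \<in> lpa_derived s r n"
  using assms(3-)
proof (induction n arbitrary: x z)
  case 0
  have "fadd (fstar (skew_unit x z)) (skew_unit x z) = (fzero :: _ \<Rightarrow> 'k)"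
    unfolding fstar_skew_unit by (simp add: fadd_def skew_unit_def fminus_def)
  then show ?case
    using skew_unit_in_free_alg lpa_matrix_units_nonempty[OF units \<open>x \<in> P\<close>]
    by (simp add: lpa_ideal_def ideal_gen_def lspan_zero)
next
  case (Suc n)
  have "card P - card {x, z} \<le> card (P - {x, z})"
    by (rule diff_card_le_card_Diff) simp
  with card \<open>x \<noteq> z\<close> have "card (P - {x, z}) \<noteq> 0"
    by simp
  then have "P - {x, z} \<noteq> {}"
    by (metis card.empty)
  then obtain y where y: "y \<in> P" "y \<noteq> x" "y \<noteq> z"
    by blast
  let ?gens = "{fbracket a b | a b. a \<in> lpa_derived s r n \<and> b \<in> lpa_derived s r n} \<union> lpa_ideal s r"
  let ?b = "fbracket (skew_unit x y) (skew_unit y z) :: _ \<Rightarrow> 'k"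
  have "?b \<in> lspan ?gens"
    using Suc.IH[of x y] Suc.IH[of y z] Suc.prems y by (blast intro: lspan_base)
  moreover have "fminus (skew_unit x z) ?b \<in> lspan ?gens"
    using skew_unit_bracket[OF units] Suc.prems y
    by (intro lspan_base UnI2) (simp add: lpa_ideal_def ideal_cong_def[symmetric] ideal_cong_sym)
  ultimately have "fadd ?b (fminus (skew_unit x z) ?b) \<in> lspan ?gens"
    by (rule lspan_add)
  moreover have "fadd ?b (fminus (skew_unit x z) ?b) = skew_unit x z"
    by (simp add: fadd_def fminus_def)
  ultimately show ?case by simp
qed

lemma not_skew_lie_solvable_if_skew_unit_notin_ideal:
  assumes "lpa_matrix_units s r TYPE('k::field) v P" "3 \<le> card P" "x \<in> P" "z \<in> P" "x \<noteq> z"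
    and "(skew_unit x z :: _ \<Rightarrow> 'k) \<notin> lpa_ideal s r"
  shows "\<not> skew_lie_solvable s r TYPE('k)"
  using skew_unit_lpa_derived[OF assms(1-5)] assms(6) unfolding skew_lie_solvable_def by blast

section \<open>The action of words on paths\<close>

definition finite_support :: "('g list \<Rightarrow> 'k::field) \<Rightarrow> bool" where
  "finite_support x \<longleftrightarrow> finite {m. x m \<noteq> 0}"

lemma finite_support_mono: "finite_support (mono w :: _ \<Rightarrow> 'k::field)"
  unfolding finite_support_def by (rule finite_subset[of _ "{w}"]) (auto simp: mono_def)

lemma finite_support_fzero: "finite_support (fzero :: _ \<Rightarrow> 'k::field)"
  by (simp add: finite_support_def)

lemma finite_support_fadd: "finite_support x \<Longrightarrow> finite_support y \<Longrightarrow> finite_support (fadd x y)"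
  unfolding finite_support_def
  by (rule finite_subset[of _ "{m. x m \<noteq> 0} \<union> {m. y m \<noteq> 0}"]) (auto simp: fadd_def)

lemma finite_support_fsmult: "finite_support x \<Longrightarrow> finite_support (fsmult c x)"
  unfolding finite_support_def
  by (rule finite_subset[of _ "{m. x m \<noteq> 0}"]) (auto simp: fsmult_def)

lemma finite_support_fminus:
  "finite_support x \<Longrightarrow> finite_support y \<Longrightarrow> finite_support (fminus x y)"
  unfolding finite_support_def
  by (rule finite_subset[of _ "{m. x m \<noteq> 0} \<union> {m. y m \<noteq> 0}"]) (auto simp: fminus_def)

lemma support_ctx: "{m. ctx u x w m \<noteq> 0} = (\<lambda>m. u @ m @ w) ` {m. x m \<noteq> 0}"
proof (intro equalityI subsetI)
  fix m assume m: "m \<in> {m. ctx u x w m \<noteq> 0}"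
  then obtain m' where "m = u @ m' @ w"
    using ctx_eq_0 by blast
  with m show "m \<in> (\<lambda>m. u @ m @ w) ` {m. x m \<noteq> 0}" by auto
qed auto

lemma finite_support_ctx: "finite_support x \<Longrightarrow> finite_support (ctx u x w)"
  by (simp add: finite_support_def support_ctx)

lemma finite_support_sum:
  "finite E \<Longrightarrow> (\<And>e. e \<in> E \<Longrightarrow> finite_support (f e)) \<Longrightarrow>
    finite_support (\<lambda>w. \<Sum>e\<in>E. f e w :: 'k::field)"
  unfolding finite_support_def
  by (rule finite_subset[of _ "\<Union>e\<in>E. {m. f e m \<noteq> 0}"]) (auto elim: sum.not_neutral_contains_not_neutral)

(* The state (v, es) stands for the path es from v. At a regular vertex w the empty path is
   identified with the path [g w]: the ghost of g w sends the empty path at w to the empty path at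
   r (g w), and g w sends it back. This is what makes w = \<Sigma>_{s e = w} e e^* hold. *)
type_synonym ('v, 'e) state = "'v \<times> 'e list"

fun gen_act :: "('e \<Rightarrow> 'v) \<Rightarrow> ('e \<Rightarrow> 'v) \<Rightarrow> ('v \<Rightarrow> 'e) \<Rightarrow> ('v, 'e) gen \<Rightarrow>
    ('v, 'e) state \<Rightarrow> ('v, 'e) state option" where
  "gen_act s r g (V u) (v, es) = (if u = v then Some (v, es) else None)"
| "gen_act s r g (Ed e) (v, es) =
    (if r e \<noteq> v then None
     else if es = [] \<and> regular s (s e) \<and> e = g (s e) then Some (s e, [])
     else Some (s e, e # es))"
| "gen_act s r g (Gh e) (v, []) = (if regular s v \<and> e = g v then Some (r e, []) else None)"
| "gen_act s r g (Gh e) (v, e' # es) = (if e = e' then Some (r e, es) else None)"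

fun word_act :: "('e \<Rightarrow> 'v) \<Rightarrow> ('e \<Rightarrow> 'v) \<Rightarrow> ('v \<Rightarrow> 'e) \<Rightarrow> ('v, 'e) gen list \<Rightarrow>
    ('v, 'e) state \<Rightarrow> ('v, 'e) state option" where
  "word_act s r g [] q = Some q"
| "word_act s r g (a # m) q = Option.bind (word_act s r g m q) (gen_act s r g a)"

lemma word_act_append:
  "word_act s r g (u @ m) q = Option.bind (word_act s r g m q) (word_act s r g u)"
  by (induction u) (auto simp: bind_assoc)

definition act_eval :: "('e \<Rightarrow> 'v) \<Rightarrow> ('e \<Rightarrow> 'v) \<Rightarrow> ('v \<Rightarrow> 'e) \<Rightarrow>
    (('v, 'e) gen list \<Rightarrow> 'k::field) \<Rightarrow> ('v, 'e) state \<Rightarrow> (('v, 'e) state \<Rightarrow> 'k) \<Rightarrow> 'k" where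
  "act_eval s r g x q h = (\<Sum>m | x m \<noteq> 0. x m * case_option 0 h (word_act s r g m q))"

lemma act_eval_superset:
  assumes "finite S" "{m. x m \<noteq> 0} \<subseteq> S"
  shows "act_eval s r g x q h = (\<Sum>m\<in>S. x m * case_option 0 h (word_act s r g m q))"
  unfolding act_eval_def by (rule sum.mono_neutral_left) (use assms in auto)

lemma act_eval_mono: "act_eval s r g (mono w) q h = case_option 0 h (word_act s r g w q)"
  by (subst act_eval_superset[of "{w}"]) (auto simp: mono_def)

lemma act_eval_fzero: "act_eval s r g fzero q h = 0"
  by (simp add: act_eval_def)

lemma act_eval_fadd:
  assumes "finite_support x" "finite_support y"
  shows "act_eval s r g (fadd x y) q h = act_eval s r g x q h + act_eval s r g y q h"
proof -
  let ?S = "{m. x m \<noteq> 0} \<union> {m. y m \<noteq> 0}"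
  have S: "finite ?S" using assms by (simp add: finite_support_def)
  have "{m. fadd x y m \<noteq> 0} \<subseteq> ?S"
    by (auto simp: fadd_def)
  then have "act_eval s r g (fadd x y) q h =
      (\<Sum>m\<in>?S. fadd x y m * case_option 0 h (word_act s r g m q))"
    by (rule act_eval_superset[OF S])
  then show ?thesis
    using act_eval_superset[OF S, of x] act_eval_superset[OF S, of y]
    by (simp add: fadd_def distrib_right sum.distrib)
qed

lemma act_eval_fsmult:
  assumes "finite_support x"
  shows "act_eval s r g (fsmult c x) q h = c * act_eval s r g x q h"
proof -
  have S: "finite {m. x m \<noteq> 0}" using assms by (simp add: finite_support_def)
  show ?thesis
    using act_eval_superset[OF S, where x="fsmult c x" and s=s and r=r and g=g and q=q and h=h]
      act_eval_superset[OF S, where x=x and s=s and r=r and g=g and q=q and h=h]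
    by (simp add: fsmult_def sum_distrib_left mult.assoc subset_iff)
qed

lemma act_eval_fminus:
  assumes "finite_support x" "finite_support y"
  shows "act_eval s r g (fminus x y) q h = act_eval s r g x q h - act_eval s r g y q h"
proof -
  have "fminus x y = fadd x (fsmult (-1) y)"
    by (simp add: fminus_def fadd_def fsmult_def fun_eq_iff)
  then show ?thesis
    using assms by (simp add: act_eval_fadd act_eval_fsmult finite_support_fsmult)
qed

lemma act_eval_sum:
  assumes "finite E" "\<And>e. e \<in> E \<Longrightarrow> finite_support (f e)"
  shows "act_eval s r g (\<lambda>w. \<Sum>e\<in>E. f e w) q h = (\<Sum>e\<in>E. act_eval s r g (f e) q h)"
  using assms
proof (induction E rule: finite_induct)
  case empty
  then show ?case by (simp add: act_eval_fzero)
next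
  case (insert e E)
  have "(\<lambda>w. \<Sum>e\<in>insert e E. f e w) = fadd (f e) (\<lambda>w. \<Sum>e\<in>E. f e w)"
    using insert.hyps by (simp add: fadd_def)
  then show ?case
    using insert by (simp add: act_eval_fadd finite_support_sum)
qed

lemma case_option_bind:
  "case_option 0 h (Option.bind X f) = case_option 0 (\<lambda>q. case_option 0 h (f q)) X"
  by (cases X) simp_all

lemma act_eval_ctx:
  "act_eval s r g (ctx u x w) q h =
    case_option 0 (\<lambda>q'. act_eval s r g x q' (\<lambda>q''. case_option 0 h (word_act s r g u q'')))
      (word_act s r g w q)"
proof -
  have "act_eval s r g (ctx u x w) q h =
      (\<Sum>m | x m \<noteq> 0. x m * case_option 0 h (word_act s r g (u @ m @ w) q))"
    unfolding act_eval_def support_ctx by (subst sum.reindex) (auto simp: inj_on_def)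
  also have "\<dots> = case_option 0 (\<lambda>q'. act_eval s r g x q' (\<lambda>q''. case_option 0 h (word_act s r g u q'')))
      (word_act s r g w q)"
    by (cases "word_act s r g w q") (simp_all add: act_eval_def word_act_append case_option_bind)
  finally show ?thesis .
qed

lemma finite_support_lpa_rel: "x \<in> lpa_rels s r \<Longrightarrow> finite_support x"
  unfolding lpa_rels_def
  by (auto simp: regular_def intro!: finite_support_fminus finite_support_mono finite_support_fzero
      finite_support_sum)

fun walk_from :: "('e \<Rightarrow> 'v) \<Rightarrow> ('e \<Rightarrow> 'v) \<Rightarrow> 'v \<Rightarrow> 'e list \<Rightarrow> bool" where
  "walk_from s r v [] \<longleftrightarrow> True"
| "walk_from s r v (e # es) \<longleftrightarrow> s e = v \<and> walk_from s r (r e) es"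

definition ends_special :: "('e \<Rightarrow> 'v) \<Rightarrow> ('v \<Rightarrow> 'e) \<Rightarrow> 'e list \<Rightarrow> bool" where
  "ends_special s g es \<longleftrightarrow> es \<noteq> [] \<and> regular s (s (last es)) \<and> last es = g (s (last es))"

definition valid_state :: "('e \<Rightarrow> 'v) \<Rightarrow> ('e \<Rightarrow> 'v) \<Rightarrow> ('v \<Rightarrow> 'e) \<Rightarrow> ('v, 'e) state \<Rightarrow> bool" where
  "valid_state s r g q \<longleftrightarrow> walk_from s r (fst q) (snd q) \<and> \<not> ends_special s g (snd q)"

locale special_edges =
  fixes s r :: "'e \<Rightarrow> 'v" and g :: "'v \<Rightarrow> 'e"
  assumes src_special_edge: "regular s v \<Longrightarrow> s (g v) = v"
begin

lemma valid_gen_act: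
  assumes "valid_state s r g q" "gen_act s r g a q = Some q'"
  shows "valid_state s r g q'"
proof -
  obtain v es where q: "q = (v, es)" by (cases q)
  show ?thesis
    using assms src_special_edge unfolding q
    by (cases a; cases es) (auto simp: valid_state_def ends_special_def split: if_splits)
qed

lemma valid_word_act: "valid_state s r g q \<Longrightarrow> word_act s r g m q = Some q' \<Longrightarrow> valid_state s r g q'"
proof (induction m arbitrary: q')
  case (Cons a m)
  then obtain q'' where "word_act s r g m q = Some q''" "gen_act s r g a q'' = Some q'"
    by (cases "word_act s r g m q") auto
  with Cons show ?case using valid_gen_act by blast
qed simp

lemmas act_eval_word_simps =
  act_eval_fminus act_eval_mono act_eval_fzero finite_support_mono finite_support_fzero

lemma word_act_edge_ghost:
  assumes "valid_state s r g (v, es)"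
  shows "word_act s r g [Ed e, Gh e] (v, es) =
    (if e = (case es of [] \<Rightarrow> g v | e' # _ \<Rightarrow> e') \<and> (es = [] \<longrightarrow> regular s v)
     then Some (v, es) else None)"
proof (cases es)
  case Nil
  then show ?thesis by (auto simp: src_special_edge)
next
  case (Cons e' es')
  with assms show ?thesis by (auto simp: valid_state_def ends_special_def)
qed

lemma act_eval_vertex_sum:
  assumes valid: "valid_state s r g q" and reg: "regular s u"
  shows "act_eval s r g (fminus (mono [V u]) (\<lambda>w. \<Sum>e | s e = u. mono [Ed e, Gh e] w)) q h = 0"
proof -
  obtain v es where q: "q = (v, es)" by (cases q)
  define c where "c = (case es of [] \<Rightarrow> g v | e' # _ \<Rightarrow> e')"
  define P where "P \<longleftrightarrow> (es = [] \<longrightarrow> regular s v)"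
  have fin: "finite {e. s e = u}"
    using reg by (simp add: regular_def)
  have c_src: "P \<Longrightarrow> s c = v"
    using valid by (cases es) (auto simp: q c_def P_def valid_state_def src_special_edge)
  have "(\<Sum>e | s e = u. case_option 0 h (word_act s r g [Ed e, Gh e] q)) =
      (\<Sum>e | s e = u. if P then (if e = c then h q else 0) else 0)"
    using word_act_edge_ghost[of v es] valid unfolding q c_def P_def
    by (intro sum.cong refl) (simp del: word_act.simps)
  also have "\<dots> = (if P \<and> s c = u then h q else 0)"
    using fin by (cases P) (simp_all add: sum.delta)
  also have "\<dots> = (if v = u then h q else 0)"
    using c_src reg by (auto simp: P_def)
  finally show ?thesis
    using fin by (simp add: act_eval_word_simps act_eval_sum finite_support_sum q)
qed

lemma act_eval_lpa_rel:
  assumes "x \<in> lpa_rels s r" and valid: "valid_state s r g q"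
  shows "act_eval s r g x q h = 0"
proof -
  obtain v es where q: "q = (v, es)" by (cases q)
  show ?thesis
    using assms(1) unfolding lpa_rels_def
  proof (elim UnE CollectE exE conjE)
    fix u u' assume "x = fminus (mono [V u, V u']) (if u = u' then mono [V u] else fzero)"
    then show ?thesis by (simp add: q act_eval_word_simps)
  next
    fix e assume "x = fminus (mono [V (s e), Ed e]) (mono [Ed e])"
    then show ?thesis by (simp add: q act_eval_word_simps)
  next
    fix e assume "x = fminus (mono [Ed e, V (r e)]) (mono [Ed e])"
    then show ?thesis by (simp add: q act_eval_word_simps)
  next
    fix e assume "x = fminus (mono [V (r e), Gh e]) (mono [Gh e])"
    then show ?thesis by (cases es) (simp_all add: q act_eval_word_simps)
  next
    fix e assume "x = fminus (mono [Gh e, V (s e)]) (mono [Gh e])"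
    then show ?thesis
      using valid src_special_edge[of v]
      by (cases es) (simp_all add: q act_eval_word_simps valid_state_def)
  next
    fix e f assume "x = fminus (mono [Gh e, Ed f]) (if e = f then mono [V (r e)] else fzero)"
    then show ?thesis
      by (cases "e = f") (simp_all add: q act_eval_word_simps)
  next
    fix u assume "x = fminus (mono [V u]) (\<lambda>w. \<Sum>e | s e = u. mono [Ed e, Gh e] w)" "regular s u"
    then show ?thesis using act_eval_vertex_sum[OF valid] by simp
  qed
qed

lemma act_eval_lpa_ideal:
  assumes "x \<in> lpa_ideal s r"
  shows "finite_support x \<and> (\<forall>q h. valid_state s r g q \<longrightarrow> act_eval s r g x q h = 0)"
  using assms unfolding lpa_ideal_def ideal_gen_eq_lspan_ctx
proof (induction x rule: lspan.induct)
  case lspan_zero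
  then show ?case by (simp add: finite_support_fzero act_eval_fzero)
next
  case (lspan_base x)
  then obtain u y w where x: "x = ctx u y w" and y: "y \<in> lpa_rels s r" by blast
  have "act_eval s r g x q h = 0" if "valid_state s r g q" for q h
    using act_eval_lpa_rel[OF y valid_word_act[OF that]] unfolding x act_eval_ctx
    by (cases "word_act s r g w q") simp_all
  then show ?case using finite_support_ctx[OF finite_support_lpa_rel[OF y]] x by blast
next
  case (lspan_add x y)
  then show ?case by (simp add: act_eval_fadd finite_support_fadd)
next
  case (lspan_smult x c)
  then show ?case by (simp add: act_eval_fsmult finite_support_fsmult)
qed

lemma notin_lpa_ideal_if_act_eval_nonzero:
  "valid_state s r g q \<Longrightarrow> act_eval s r g x q h \<noteq> 0 \<Longrightarrow> x \<notin> lpa_ideal s r"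
  using act_eval_lpa_ideal by blast

end

lemma special_edges_some: "special_edges s (\<lambda>u. SOME e. s e = u)"
  by unfold_locales (auto simp: regular_def intro: someI_ex)

lemma word_act_Cons_fst:
  assumes "word_act s r g (a # m) q = Some q'"
  shows "fst q' = left_vertex s r a"
proof -
  obtain q'' v es where
    "word_act s r g m q = Some q''" "q'' = (v, es)" "gen_act s r g a (v, es) = Some q'"
    using assms by (cases "word_act s r g m q") auto
  then show ?thesis by (cases a; cases es) (auto split: if_splits)
qed

lemma word_act_walk:
  assumes "walk_to s r \<alpha> v"
  shows "\<exists>q'. word_act s r g (map Ed \<alpha>) (v, es) = Some q' \<and> fst q' = walk_start s v \<alpha>"
  using assms
proof (induction \<alpha>)
  case (Cons e \<alpha>)
  then obtain q' where "word_act s r g (map Ed \<alpha>) (v, es) = Some q'" "fst q' = r e" by auto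
  then show ?case by (cases q') auto
qed simp

section \<open>The configurations of the theorem\<close>

lemma not_skew_lie_solvable_vertex_and_walks:
  assumes walks: "walk_to s r \<alpha> v" "walk_to s r \<beta> v"
    and diverging: "diverging s v [] \<alpha>" "diverging s v [] \<beta>" "diverging s v \<alpha> \<beta>"
  shows "\<not> skew_lie_solvable s r TYPE('k::field)"
proof -
  let ?P = "path_word v ` {[], \<alpha>, \<beta>}"
  have units: "lpa_matrix_units s r TYPE('k) v ?P"
    by (rule lpa_matrix_units_path_words) (use walks diverging in \<open>auto intro: diverging_sym\<close>)
  have distinct: "[] \<noteq> \<alpha>" "[] \<noteq> \<beta>" "\<alpha> \<noteq> \<beta>"
    using diverging not_diverging_self by metis+
  then have card: "3 \<le> card ?P"
    by (subst card_image[OF inj_on_subset[OF inj_path_word]]) auto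
  have start: "s (hd \<alpha>) \<noteq> v"
    using diverging(1) distinct(1) by (cases \<alpha>) (auto simp: diverging_def)
  interpret special_edges s r "\<lambda>u. SOME e. s e = u"
    by (rule special_edges_some)
  \<comment> \<open>The two summands of the skew unit send the empty path at v to paths starting at
    s (hd \<alpha>) and at v respectively, so looking at the start vertex separates them.\<close>
  let ?g = "\<lambda>u. SOME e. s e = u" and ?h = "\<lambda>q. if fst q = s (hd \<alpha>) then 1 else 0 :: 'k"
  let ?H = "\<lambda>m. case_option 0 ?h (word_act s r ?g m (v, []))"
  obtain q where q: "word_act s r ?g (map Ed \<alpha>) (v, []) = Some q" "fst q = s (hd \<alpha>)"
    using word_act_walk[OF walks(1)] distinct(1) by (cases \<alpha>) fastforce+
  have "?H (map Ed \<alpha> @ [V v]) = 1"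
    using q by (simp add: word_act_append)
  moreover have "?H (V v # map Gh (rev \<alpha>)) = 0"
    using start word_act_Cons_fst[of s r ?g "V v" "map Gh (rev \<alpha>)" "(v, [])"]
    by (cases "word_act s r ?g (V v # map Gh (rev \<alpha>)) (v, [])") auto
  ultimately have "act_eval s r ?g (skew_unit (path_word v \<alpha>) (path_word v [])) (v, []) ?h \<noteq> 0"
    using distinct(1)
    by (simp add: skew_unit_def path_word_def act_eval_word_simps del: word_act.simps)
  then have "(skew_unit (path_word v \<alpha>) (path_word v []) :: _ \<Rightarrow> 'k) \<notin> lpa_ideal s r"
    by (rule notin_lpa_ideal_if_act_eval_nonzero[rotated]) (simp add: valid_state_def ends_special_def)
  then show ?thesis
    using distinct inj_path_word[THEN injD, of v]
    by (intro not_skew_lie_solvable_if_skew_unit_notin_ideal[OF units card]) auto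
qed

lemma not_skew_lie_solvable_two_loops:
  assumes ef: "e \<noteq> f" and loops: "s e = w" "r e = w" "s f = w" "r f = w"
  shows "\<not> skew_lie_solvable s r TYPE('k::field)"
proof -
  let ?P = "path_word w ` {[f], [e, f], [e, e, f]}"
  have units: "lpa_matrix_units s r TYPE('k) w ?P"
  proof (rule lpa_matrix_units_path_words)
    fix \<alpha> \<beta> assume "\<alpha> \<in> {[f], [e, f], [e, e, f]}" "\<beta> \<in> {[f], [e, f], [e, e, f]}" "\<alpha> \<noteq> \<beta>"
    then show "diverging s w \<alpha> \<beta>"
      unfolding diverging_def using ef
      by (elim insertE emptyE; simp) (metis append_Nil append_Cons)+
  qed (use loops in auto)
  have card: "3 \<le> card ?P"
    using ef by (subst card_image[OF inj_on_subset[OF inj_path_word]]) auto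
  \<comment> \<open>Making e distinguished at w keeps the state (w, [e, f]) collapse-free.\<close>
  define g where "g u = (if u = w then e else SOME e. s e = u)" for u
  interpret special_edges s r g
    by unfold_locales (auto simp: g_def loops regular_def intro: someI_ex)
  let ?h = "\<lambda>q. if q = (w, [f]) then 1 else 0 :: 'k"
  have valid: "valid_state s r g (w, [e, f])"
    using ef loops by (simp add: valid_state_def ends_special_def g_def)
  have "act_eval s r g (skew_unit (path_word w [f]) (path_word w [e, f])) (w, [e, f]) ?h \<noteq> 0"
    using ef loops by (simp add: skew_unit_def path_word_def act_eval_word_simps g_def)
  then have "(skew_unit (path_word w [f]) (path_word w [e, f]) :: _ \<Rightarrow> 'k) \<notin> lpa_ideal s r"
    by (rule notin_lpa_ideal_if_act_eval_nonzero[OF valid])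
  then show ?thesis
    using ef inj_path_word[THEN injD, of w]
    by (intro not_skew_lie_solvable_if_skew_unit_notin_ideal[OF units card]) auto
qed

lemma not_skew_lie_solvable_path_of_length_two:
  assumes "s e = x" "r e = y" "s f = y" "r f = v" "distinct [x, y, v]"
  shows "\<not> skew_lie_solvable s r TYPE('k::field)"
  by (rule not_skew_lie_solvable_vertex_and_walks[of s r "[e, f]" v "[f]"])
    (use assms in \<open>auto simp: diverging_def\<close>)

lemma diverging_Cons: "a \<noteq> b \<Longrightarrow> diverging s v (a # \<alpha>) (b # \<beta>)"
  unfolding diverging_def by (metis append_Nil)

lemma not_skew_lie_solvable_two_edges_into:
  assumes "e \<noteq> f" "r e = v" "r f = v" "s e \<noteq> v" "s f \<noteq> v"
  shows "\<not> skew_lie_solvable s r TYPE('k::field)"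
proof (rule not_skew_lie_solvable_vertex_and_walks[of s r "[e]" v "[f]"])
  show "diverging s v [e] [f]"
    using assms(1) by (rule diverging_Cons)
qed (use assms in \<open>auto simp: diverging_def\<close>)

lemma not_skew_lie_solvable_loop_with_exit:
  assumes "e \<noteq> f" "s e = w" "r e = w" "s f = w"
  shows "\<not> skew_lie_solvable s r TYPE('k::field)"
proof (cases "r f = w")
  case True
  then show ?thesis using not_skew_lie_solvable_two_loops assms by metis
next
  case False
  have "diverging s (r f) [f] [e, f]"
    using assms(1) by (intro diverging_Cons) simp
  with False show ?thesis
    by (intro not_skew_lie_solvable_vertex_and_walks[of s r "[f]" "r f" "[e, f]"])
      (use assms in \<open>auto simp: diverging_def\<close>)
qed

lemma not_skew_lie_solvable_two_cycle_with_exit: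
  assumes "s a \<noteq> s b" "r a = s b" "r b = s a" "s f = s a" "f \<noteq> a"
  shows "\<not> skew_lie_solvable s r TYPE('k::field)"
proof -
  consider "r f = s a" | "r f = s b" | "r f \<noteq> s a" "r f \<noteq> s b" by blast
  then show ?thesis
  proof cases
    case 1
    then show ?thesis
      using assms
      by (intro not_skew_lie_solvable_loop_with_exit[where e=f and f=a and w="s a"]) auto
  next
    case 2
    then show ?thesis
      using assms
      by (intro not_skew_lie_solvable_two_edges_into[where e=a and f=f and v="s b"]) auto
  next
    case 3
    then show ?thesis
      using assms
      by (intro not_skew_lie_solvable_path_of_length_two[where e=b and f=f and v="r f"]) auto
  qed
qed

lemma not_skew_lie_solvable_cycle_with_exit:
  assumes "has_cycle_with_exit s r"
  shows "\<not> skew_lie_solvable s r TYPE('k::field)"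
proof -
  obtain p f where cycle: "is_cycle s r p" and "is_exit s p f"
    using assms unfolding has_cycle_with_exit_def by blast
  then obtain i where i: "i < length p" "s f = s (p ! i)" "f \<noteq> p ! i"
    unfolding is_exit_def by blast
  have step: "\<And>i. Suc i < length p \<Longrightarrow> r (p ! i) = s (p ! Suc i)"
    and closed: "s (hd p) = r (last p)" and dist: "distinct (map s p)" and "p \<noteq> []"
    using cycle unfolding is_cycle_def is_path_def by auto
  from \<open>p \<noteq> []\<close> consider e where "p = [e]" | a b where "p = [a, b]" | "2 < length p"
    by (cases p; cases "tl p"; cases "tl (tl p)") auto
  then show ?thesis
  proof cases
    case 1
    then show ?thesis
      using i closed
      by (intro not_skew_lie_solvable_loop_with_exit[where e="p ! i" and f=f and w="s (p ! i)"]) auto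
  next
    case 2
    then have ab: "s a \<noteq> s b" "r a = s b" "r b = s a"
      using dist step[of 0] closed by auto
    have "i = 0 \<or> i = 1"
      using i 2 by auto
    then show ?thesis
    proof
      assume "i = 0"
      then show ?thesis
        using i 2 ab
        by (intro not_skew_lie_solvable_two_cycle_with_exit[where a=a and b=b and f=f]) auto
    next
      assume "i = 1"
      then show ?thesis
        using i 2 ab
        by (intro not_skew_lie_solvable_two_cycle_with_exit[where a=b and b=a and f=f]) auto
    qed
  next
    case 3
    have "distinct [s (p ! 0), s (p ! 1), s (p ! 2)]"
      using 3 \<open>p \<noteq> []\<close> nth_eq_iff_index_eq[OF dist, of 0 1] nth_eq_iff_index_eq[OF dist, of 0 2]
        nth_eq_iff_index_eq[OF dist, of 1 2]
      by simp
    then show ?thesis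
      using step[of 0] step[of 1] 3
      by (intro not_skew_lie_solvable_path_of_length_two[where e="p ! 0" and f="p ! 1"])
        (auto simp: numeral_2_eq_2)
  qed
qed

theorem lemma4p2:
  fixes s r :: "'e \<Rightarrow> 'v"
  assumes "has_cycle_with_exit s r \<or> contains_F1 s r \<or> contains_F2 s r \<or> contains_F3 s r"
  shows "\<not> skew_lie_solvable s r TYPE('k::field)"
  using assms
proof (elim disjE)
  assume "has_cycle_with_exit s r"
  then show ?thesis by (rule not_skew_lie_solvable_cycle_with_exit)
next
  assume "contains_F1 s r"
  then obtain x y v e f where "distinct [x, y, v]" "s e = x" "r e = y" "s f = y" "r f = v"
    unfolding contains_F1_def by blast
  then show ?thesis
    by (intro not_skew_lie_solvable_path_of_length_two[where e=e and f=f])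
next
  assume "contains_F2 s r"
  then obtain x v z e f where "distinct [x, v, z]" "s e = x" "r e = v" "s f = z" "r f = v"
    unfolding contains_F2_def by blast
  then show ?thesis
    by (intro not_skew_lie_solvable_two_edges_into[where e=e and f=f and v=v]) auto
next
  assume "contains_F3 s r"
  then obtain x v e f where "x \<noteq> v" "e \<noteq> f" "s e = x" "r e = v" "s f = x" "r f = v"
    unfolding contains_F3_def by blast
  then show ?thesis
    by (intro not_skew_lie_solvable_two_edges_into[where e=e and f=f and v=v]) auto
qed

end
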